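(* Let $N,S,k$ be positive integers and let $e_n(s)$ ($1\le n\le N$, $1\le s\le S$) be chosen independently and uniformly from $\{-1,+1\}$; put $G_{N,S}(s)=(e_1(s),\dots,e_N(s))$. For every $\theta\ge0$, \[ \mathbb{P}\left[\left|\Phi_k(G_{N,S})-\mathbb{E}[\Phi_k(G_{N,S})]\right|\ge\theta\right]\le 2\exp\left\{-\frac{\theta^2}{2k^2N}\right\}. \]
   Context: For a map $G_{N,S}:\{1,\dots,S\}\to\{-1,+1\}^N$, $G_{N,S}(s)=(e_1(s),\dots,e_N(s))$, the cross-correlation measure of order $k$ is \[ \Phi_k(G_{N,S})=\max\left|\sum_{n=1}^M e_{n+d_1}(s_1)\cdots e_{n+d_k}(s_k)\right|, \] the maximum taken over all integers $M,d_1,\dots,d_k$ and $1\le s_1,\dots,s_k\le S$ with $0\le d_1\le\dots\le d_k<M+d_k\le N$ and $d_i\ne d_j$ whenever $s_i=s_j$. *)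

theory Defs
  imports "HOL-Probability.Probability"
begin

text \<open>A sign assignment is a function e on pairs (n, s) with 1 \<le> n \<le> N, 1 \<le> s \<le> S,
  e (n, s) = e_n(s) \<in> {-1, +1}; it is extensional (undefined outside the index box).\<close>

definition sign_space :: "nat \<Rightarrow> nat \<Rightarrow> (nat \<times> nat \<Rightarrow> real) set" where
  "sign_space N S = ({1..N} \<times> {1..S}) \<rightarrow>\<^sub>E {-1, 1}"

text \<open>The indices i = 0..k-1 correspond to 1..k in the paper.  The bounds M \<le> N,
  d i < N are implied by the constraints and are stated only to make finiteness evident.\<close>

definition admissible :: "nat \<Rightarrow> nat \<Rightarrow> nat \<Rightarrow> (nat \<times> (nat \<Rightarrow> nat) \<times> (nat \<Rightarrow> nat)) set" where
  "admissible N S k = {(M, d, s). M \<in> {1..N} \<and> d \<in> {0..<k} \<rightarrow>\<^sub>E {0..<N} \<and> s \<in> {0..<k} \<rightarrow>\<^sub>E {1..S}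
      \<and> (\<forall>i j. i \<le> j \<and> j < k \<longrightarrow> d i \<le> d j)
      \<and> d (k - 1) < M + d (k - 1) \<and> M + d (k - 1) \<le> N
      \<and> (\<forall>i<k. \<forall>j<k. i \<noteq> j \<and> s i = s j \<longrightarrow> d i \<noteq> d j)}"

definition cross_corr :: "nat \<Rightarrow> nat \<Rightarrow> nat \<Rightarrow> (nat \<times> nat \<Rightarrow> real) \<Rightarrow> real" where
  "cross_corr N S k e = Max (insert 0
     {\<bar>\<Sum>n = 1..M. \<Prod>i<k. e (n + d i, s i)\<bar> | M d s. (M, d, s) \<in> admissible N S k})"

end

theory Submission imports Defs begin

text \<open>View a sign assignment as its N rows (e_n(1), ..., e_n(S)), which are independent and
  uniform. Changing one row changes each correlation sum of order k by at most 2k, since at most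
  k of its terms contain an entry of that row; so \<Phi>_k has bounded differences with constant 2k,
  and McDiarmid's inequality with N coordinates gives 2 exp(-2 \<theta>^2 / (N (2k)^2)). McDiarmid's
  inequality for the uniform distribution on a finite product follows by the Chernoff method,
  bounding the moment generating function one coordinate at a time with Hoeffding's lemma.\<close>

definition avg :: "'a set \<Rightarrow> ('a \<Rightarrow> real) \<Rightarrow> real" where
  "avg X f = (\<Sum>x\<in>X. f x) / card X"

lemma avg_mono: "finite X \<Longrightarrow> (\<And>x. x \<in> X \<Longrightarrow> f x \<le> g x) \<Longrightarrow> avg X f \<le> avg X g"
  unfolding avg_def by (intro divide_right_mono sum_mono) auto

lemma avg_cmult: "avg X (\<lambda>x. K * f x) = K * avg X f"
  unfolding avg_def by (simp add: sum_distrib_left)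

lemma avg_const: "finite X \<Longrightarrow> X \<noteq> {} \<Longrightarrow> avg X (\<lambda>x. K) = K"
  unfolding avg_def by simp

lemma avg_diff: "avg X (\<lambda>x. f x - g x) = avg X f - avg X g"
  unfolding avg_def by (simp add: sum_subtractf diff_divide_distrib)

lemma avg_uminus: "avg X (\<lambda>x. - f x) = - avg X f"
  unfolding avg_def by (simp add: sum_negf)

lemma avg_eq_expectation_pmf_of_set:
  "finite X \<Longrightarrow> X \<noteq> {} \<Longrightarrow> avg X f = measure_pmf.expectation (pmf_of_set X) f"
  by (simp add: integral_pmf_of_set avg_def)

lemma avg_PiE_insert:
  assumes "i \<notin> I" "finite I" "finite (B i)"
  shows "avg (Pi\<^sub>E (insert i I) B) g = avg (Pi\<^sub>E I B) (\<lambda>y. avg (B i) (\<lambda>a. g (y(i := a))))"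
proof -
  have "(\<Sum>x\<in>Pi\<^sub>E (insert i I) B. g x) = (\<Sum>(a, y)\<in>B i \<times> Pi\<^sub>E I B. g (y(i := a)))"
    unfolding PiE_insert_eq by (subst sum.reindex[OF inj_combinator[OF assms(1)]]) (simp add: split_def)
  also have "\<dots> = (\<Sum>y\<in>Pi\<^sub>E I B. \<Sum>a\<in>B i. g (y(i := a)))"
    by (simp add: sum.cartesian_product[symmetric] sum.swap[of _ "B i"])
  finally have "(\<Sum>x\<in>Pi\<^sub>E (insert i I) B. g x) = (\<Sum>y\<in>Pi\<^sub>E I B. \<Sum>a\<in>B i. g (y(i := a)))" .
  moreover have "card (Pi\<^sub>E (insert i I) B) = card (B i) * card (Pi\<^sub>E I B)"
    using assms by (simp add: card_PiE)
  ultimately show ?thesis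
    unfolding avg_def by (simp add: sum_divide_distrib[symmetric] divide_divide_eq_left mult.commute)
qed

lemma Hoeffdings_lemma_avg:
  fixes h :: "'a \<Rightarrow> real"
  assumes A: "finite A" "A \<noteq> {}" and "l > 0" and h0: "avg A h = 0"
    and osc: "\<And>a b. a \<in> A \<Longrightarrow> b \<in> A \<Longrightarrow> h a - h b \<le> c"
  shows "avg A (\<lambda>a. exp (l * h a)) \<le> exp (l\<^sup>2 * c\<^sup>2 / 8)"
proof -
  define lo where "lo = Min (h ` A)"
  define hi where "hi = Max (h ` A)"
  have fin: "finite (h ` A)" "h ` A \<noteq> {}" using A by auto
  have "hi \<in> h ` A" "lo \<in> h ` A" unfolding hi_def lo_def using fin by (rule Max_in, rule Min_in)
  hence "hi - lo \<le> c" using osc by auto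
  moreover have "lo \<le> hi" unfolding lo_def hi_def using fin by (simp add: Min_le_iff Max_ge_iff)
  ultimately have osc_sq: "(hi - lo)\<^sup>2 \<le> c\<^sup>2" by (intro power_mono) auto
  interpret interval_bounded_random_variable "measure_pmf (pmf_of_set A)" h lo hi
  proof
    show "AE x in measure_pmf (pmf_of_set A). h x \<in> {lo..hi}"
      using A fin by (auto simp: AE_measure_pmf_iff lo_def hi_def)
  qed simp
  have "nn_integral (measure_pmf (pmf_of_set A)) (\<lambda>x. ennreal (exp (l * h x)))
          \<le> ennreal (exp (l\<^sup>2 * (hi - lo)\<^sup>2 / 8))"
    by (rule Hoeffdings_lemma_nn_integral_0)
       (use \<open>l > 0\<close> h0 A in \<open>simp_all add: avg_eq_expectation_pmf_of_set\<close>)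
  moreover have "nn_integral (measure_pmf (pmf_of_set A)) (\<lambda>x. ennreal (exp (l * h x)))
                   = ennreal (avg A (\<lambda>a. exp (l * h a)))"
    using A by (simp add: nn_integral_pmf_of_set avg_def sum_ennreal ennreal_of_nat_eq_real_of_nat
          divide_ennreal sum_nonneg card_gt_0_iff)
  ultimately have "avg A (\<lambda>a. exp (l * h a)) \<le> exp (l\<^sup>2 * (hi - lo)\<^sup>2 / 8)"
    by (simp add: ennreal_le_iff)
  also have "\<dots> \<le> exp (l\<^sup>2 * c\<^sup>2 / 8)" using osc_sq by (simp add: mult_left_mono)
  finally show ?thesis .
qed

lemma avg_exp_deviation_le_bounded_differences:
  fixes f :: "('i \<Rightarrow> 'b) \<Rightarrow> real" and c :: real
  assumes "finite I" and "\<And>i. i \<in> I \<Longrightarrow> finite (B i)" and "\<And>i. i \<in> I \<Longrightarrow> B i \<noteq> {}"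
    and "l > 0"
    and "\<And>x j a. x \<in> Pi\<^sub>E I B \<Longrightarrow> j \<in> I \<Longrightarrow> a \<in> B j \<Longrightarrow> f x - f (x(j := a)) \<le> c"
  shows "avg (Pi\<^sub>E I B) (\<lambda>x. exp (l * (f x - avg (Pi\<^sub>E I B) f))) \<le> exp (l\<^sup>2 * card I * c\<^sup>2 / 8)"
  using assms(1-3,5)
proof (induction I arbitrary: f rule: finite_induct)
  case empty
  show ?case by (simp add: avg_def)
next
  case (insert i I)
  define X where "X = Pi\<^sub>E I B"
  have X: "finite X" "X \<noteq> {}"
    unfolding X_def using insert by (auto intro!: finite_PiE simp: PiE_eq_empty_iff)
  have Bi: "finite (B i)" "B i \<noteq> {}" using insert.prems by auto
  have bd: "f x - f (x(j := a)) \<le> c" if "x \<in> Pi\<^sub>E (insert i I) B" "j \<in> insert i I" "a \<in> B j" for x j a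
    using insert.prems(3) that unfolding fun_upd_def by blast
  have upd: "y(i := a) \<in> Pi\<^sub>E (insert i I) B" if "y \<in> X" "a \<in> B i" for y a
    using that unfolding X_def by (auto simp: PiE_iff extensional_def)
  \<comment> \<open>Averaging out the new coordinate i leaves a function F of the other coordinates
    with the same bounded differences; Hoeffding's lemma controls the fluctuation around F.\<close>
  define F where "F y = avg (B i) (\<lambda>a. f (y(i := a)))" for y
  have mean: "avg (Pi\<^sub>E (insert i I) B) f = avg X F"
    unfolding X_def F_def using insert Bi by (intro avg_PiE_insert) auto
  have "F y - F (y(j := b)) \<le> c" if "y \<in> X" "j \<in> I" "b \<in> B j" for y j b
  proof -
    have "i \<noteq> j" using insert.hyps that by auto
    hence "F y - F (y(j := b)) = avg (B i) (\<lambda>a. f (y(i := a)) - f ((y(i := a))(j := b)))"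
      unfolding F_def avg_diff by (simp add: fun_upd_twist)
    also have "\<dots> \<le> avg (B i) (\<lambda>a. c)"
    proof (rule avg_mono[OF Bi(1)])
      show "f (y(i := a)) - f ((y(i := a))(j := b)) \<le> c" if "a \<in> B i" for a
        using bd[OF upd[OF \<open>y \<in> X\<close> that], of j b] \<open>j \<in> I\<close> \<open>b \<in> B j\<close> by simp
    qed
    finally show ?thesis using Bi by (simp add: avg_const)
  qed
  hence IH: "avg X (\<lambda>y. exp (l * (F y - avg X F))) \<le> exp (l\<^sup>2 * card I * c\<^sup>2 / 8)"
    unfolding X_def using insert.prems(1,2) by (intro insert.IH) blast+
  have fibre: "avg (B i) (\<lambda>a. exp (l * (f (y(i := a)) - F y))) \<le> exp (l\<^sup>2 * c\<^sup>2 / 8)"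
    if "y \<in> X" for y
  proof (rule Hoeffdings_lemma_avg[OF Bi \<open>l > 0\<close>])
    show "avg (B i) (\<lambda>a. f (y(i := a)) - F y) = 0"
      unfolding avg_diff F_def using Bi by (simp add: avg_const)
    show "f (y(i := a)) - F y - (f (y(i := b)) - F y) \<le> c" if "a \<in> B i" "b \<in> B i" for a b
      using bd[OF upd[OF \<open>y \<in> X\<close> \<open>a \<in> B i\<close>], of i b] that by simp
  qed
  have "avg (Pi\<^sub>E (insert i I) B) (\<lambda>x. exp (l * (f x - avg (Pi\<^sub>E (insert i I) B) f)))
      = avg X (\<lambda>y. avg (B i) (\<lambda>a. exp (l * (f (y(i := a)) - avg X F))))"
    unfolding mean X_def using insert Bi by (intro avg_PiE_insert) auto
  also have "\<dots> = avg X (\<lambda>y. exp (l * (F y - avg X F)) * avg (B i) (\<lambda>a. exp (l * (f (y(i := a)) - F y))))"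
    by (simp add: avg_cmult[symmetric] exp_add[symmetric] algebra_simps)
  also have "\<dots> \<le> avg X (\<lambda>y. exp (l * (F y - avg X F)) * exp (l\<^sup>2 * c\<^sup>2 / 8))"
    using fibre X by (intro avg_mono) auto
  also have "\<dots> = exp (l\<^sup>2 * c\<^sup>2 / 8) * avg X (\<lambda>y. exp (l * (F y - avg X F)))"
    by (subst avg_cmult[symmetric]) (simp add: mult.commute)
  also have "\<dots> \<le> exp (l\<^sup>2 * c\<^sup>2 / 8) * exp (l\<^sup>2 * card I * c\<^sup>2 / 8)"
    using IH by simp
  also have "\<dots> = exp (l\<^sup>2 * card (insert i I) * c\<^sup>2 / 8)"
    using insert.hyps by (simp add: exp_add[symmetric] algebra_simps add_divide_distrib)
  finally show ?case .
qed

lemma McDiarmid_upper_tail_avg: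
  fixes f :: "('i \<Rightarrow> 'b) \<Rightarrow> real" and c :: real
  assumes "finite I" and "\<And>i. i \<in> I \<Longrightarrow> finite (B i)" and "\<And>i. i \<in> I \<Longrightarrow> B i \<noteq> {}"
    and "card I > 0" and "c \<noteq> 0" and "\<theta> > 0"
    and "\<And>x j a. x \<in> Pi\<^sub>E I B \<Longrightarrow> j \<in> I \<Longrightarrow> a \<in> B j \<Longrightarrow> f x - f (x(j := a)) \<le> c"
  shows "card {x \<in> Pi\<^sub>E I B. f x - avg (Pi\<^sub>E I B) f \<ge> \<theta>} / card (Pi\<^sub>E I B)
           \<le> exp (- (2 * \<theta>\<^sup>2 / (card I * c\<^sup>2)))"
proof -
  define X where "X = Pi\<^sub>E I B"
  define n where "n = real (card I)"
  have n: "n > 0" and c: "c\<^sup>2 > 0" using assms n_def by auto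
  \<comment> \<open>The value of l that minimises the Chernoff exponent computed at the end.\<close>
  define l where "l = 4 * \<theta> / (n * c\<^sup>2)"
  have l: "l > 0" using n c \<open>\<theta> > 0\<close> l_def by simp
  have X: "finite X" "X \<noteq> {}" unfolding X_def using assms by (auto simp: finite_PiE PiE_eq_empty_iff)
  hence card_X: "real (card X) > 0" by (simp add: card_gt_0_iff)
  define T where "T = {x \<in> X. f x - avg X f \<ge> \<theta>}"
  have "card T * exp (l * \<theta>) = (\<Sum>x\<in>T. exp (l * \<theta>))" by simp
  also have "\<dots> \<le> (\<Sum>x\<in>T. exp (l * (f x - avg X f)))"
    using l by (intro sum_mono) (auto simp: T_def)
  also have "\<dots> \<le> (\<Sum>x\<in>X. exp (l * (f x - avg X f)))"
    using X by (intro sum_mono2) (auto simp: T_def)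
  finally have "card T / card X * exp (l * \<theta>) \<le> avg X (\<lambda>x. exp (l * (f x - avg X f)))"
    unfolding avg_def using card_X by (simp add: divide_right_mono)
  also have "\<dots> \<le> exp (l\<^sup>2 * n * c\<^sup>2 / 8)"
    unfolding X_def n_def using assms l by (intro avg_exp_deviation_le_bounded_differences) auto
  finally have "card T / card X \<le> exp (l\<^sup>2 * n * c\<^sup>2 / 8) / exp (l * \<theta>)"
    by (simp add: pos_le_divide_eq)
  also have "\<dots> = exp (l\<^sup>2 * n * c\<^sup>2 / 8 - l * \<theta>)" by (simp add: exp_diff)
  also have "l\<^sup>2 * n * c\<^sup>2 / 8 - l * \<theta> = - (2 * \<theta>\<^sup>2 / (n * c\<^sup>2))"
    unfolding l_def using n c by (simp add: field_simps power2_eq_square)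
  finally show ?thesis unfolding T_def X_def n_def .
qed

theorem McDiarmid_inequality_pmf_of_set:
  fixes f :: "('i \<Rightarrow> 'b) \<Rightarrow> real" and c :: real
  assumes "finite I" and "\<And>i. i \<in> I \<Longrightarrow> finite (B i)" and "\<And>i. i \<in> I \<Longrightarrow> B i \<noteq> {}"
    and "\<theta> \<ge> 0"
    and bounded_diff: "\<And>x j a. x \<in> Pi\<^sub>E I B \<Longrightarrow> j \<in> I \<Longrightarrow> a \<in> B j \<Longrightarrow> f x - f (x(j := a)) \<le> c"
  shows "measure_pmf.prob (pmf_of_set (Pi\<^sub>E I B))
           {x. \<bar>f x - measure_pmf.expectation (pmf_of_set (Pi\<^sub>E I B)) f\<bar> \<ge> \<theta>}
         \<le> 2 * exp (- (2 * \<theta>\<^sup>2 / (card I * c\<^sup>2)))"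
proof (cases "\<theta> = 0 \<or> card I = 0 \<or> c = 0")
  case True
  have "measure_pmf.prob (pmf_of_set (Pi\<^sub>E I B))
          {x. \<bar>f x - measure_pmf.expectation (pmf_of_set (Pi\<^sub>E I B)) f\<bar> \<ge> \<theta>} \<le> 1"
    by (rule measure_pmf.prob_le_1)
  \<comment> \<open>If card I = 0 or c = 0 the exponent divides by zero and is therefore 0.\<close>
  moreover have "exp (- (2 * \<theta>\<^sup>2 / (card I * c\<^sup>2))) = 1" using True by auto
  ultimately show ?thesis by linarith
next
  case False
  hence pos: "\<theta> > 0" "card I > 0" "c \<noteq> 0" using \<open>\<theta> \<ge> 0\<close> by auto
  define X where "X = Pi\<^sub>E I B"
  have X: "finite X" "X \<noteq> {}" unfolding X_def using assms by (auto simp: finite_PiE PiE_eq_empty_iff)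
  have bounded_diff_neg: "(- f x) - (- f (x(j := a))) \<le> c" if "x \<in> X" "j \<in> I" "a \<in> B j" for x j a
  proof -
    have "x(j := a) \<in> X" "x j \<in> B j" using that unfolding X_def by (auto simp: PiE_iff extensional_def)
    thus ?thesis using bounded_diff[of "x(j := a)" j "x j"] that unfolding X_def by simp
  qed
  define bound where "bound = exp (- (2 * \<theta>\<^sup>2 / (card I * c\<^sup>2)))"
  have "{x \<in> X. \<bar>f x - avg X f\<bar> \<ge> \<theta>}
          = {x \<in> X. f x - avg X f \<ge> \<theta>} \<union> {x \<in> X. - f x - avg X (\<lambda>x. - f x) \<ge> \<theta>}"
    by (auto simp: avg_uminus)
  hence "card {x \<in> X. \<bar>f x - avg X f\<bar> \<ge> \<theta>}
           \<le> card {x \<in> X. f x - avg X f \<ge> \<theta>} + card {x \<in> X. - f x - avg X (\<lambda>x. - f x) \<ge> \<theta>}"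
    by (simp add: card_Un_le)
  hence "card {x \<in> X. \<bar>f x - avg X f\<bar> \<ge> \<theta>} / card X
           \<le> card {x \<in> X. f x - avg X f \<ge> \<theta>} / card X
              + card {x \<in> X. - f x - avg X (\<lambda>x. - f x) \<ge> \<theta>} / card X"
    by (simp add: add_divide_distrib[symmetric] divide_right_mono)
  also have "\<dots> \<le> bound + bound"
    unfolding bound_def X_def using assms pos bounded_diff_neg[unfolded X_def]
    by (intro add_mono McDiarmid_upper_tail_avg) auto
  finally have "card {x \<in> X. \<bar>f x - avg X f\<bar> \<ge> \<theta>} / card X \<le> 2 * bound" by simp
  thus ?thesis
    using X by (simp add: X_def bound_def measure_pmf_of_set avg_eq_expectation_pmf_of_set Int_def)
qed

lemma bij_betw_PiE_uncurry:
  "bij_betw (\<lambda>x. restrict (case_prod x) (Sigma I J))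
     (Pi\<^sub>E I (\<lambda>i. Pi\<^sub>E (J i) (C i))) (Pi\<^sub>E (Sigma I J) (case_prod C))"
proof (rule bij_betw_byWitness[where f' = "\<lambda>e. \<lambda>i\<in>I. \<lambda>j\<in>J i. e (i, j)"])
  show "\<forall>x\<in>Pi\<^sub>E I (\<lambda>i. Pi\<^sub>E (J i) (C i)). (\<lambda>i\<in>I. \<lambda>j\<in>J i. restrict (case_prod x) (Sigma I J) (i, j)) = x"
    by (auto simp: fun_eq_iff PiE_iff extensional_def)
  show "\<forall>e\<in>Pi\<^sub>E (Sigma I J) (case_prod C). restrict (case_prod (\<lambda>i\<in>I. \<lambda>j\<in>J i. e (i, j))) (Sigma I J) = e"
    by (auto simp: fun_eq_iff PiE_iff extensional_def)
  show "(\<lambda>x. restrict (case_prod x) (Sigma I J)) ` Pi\<^sub>E I (\<lambda>i. Pi\<^sub>E (J i) (C i)) \<subseteq> Pi\<^sub>E (Sigma I J) (case_prod C)"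
    by (auto simp: PiE_iff extensional_def split: if_splits)
  show "(\<lambda>e. \<lambda>i\<in>I. \<lambda>j\<in>J i. e (i, j)) ` Pi\<^sub>E (Sigma I J) (case_prod C) \<subseteq> Pi\<^sub>E I (\<lambda>i. Pi\<^sub>E (J i) (C i))"
    by (auto simp: PiE_iff)
qed

lemma abs_sum_diff_le_card_disagreements:
  fixes a b :: "'a \<Rightarrow> real"
  assumes "finite A" and "\<And>n. n \<in> A \<Longrightarrow> \<bar>a n\<bar> \<le> 1" and "\<And>n. n \<in> A \<Longrightarrow> \<bar>b n\<bar> \<le> 1"
  shows "\<bar>(\<Sum>n\<in>A. a n) - (\<Sum>n\<in>A. b n)\<bar> \<le> 2 * card {n \<in> A. a n \<noteq> b n}"
proof -
  let ?D = "{n \<in> A. a n \<noteq> b n}"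
  have "(\<Sum>n\<in>A. a n) - (\<Sum>n\<in>A. b n) = (\<Sum>n\<in>?D. a n - b n)"
    using assms(1) by (simp add: sum_subtractf[symmetric] sum.mono_neutral_right)
  also have "\<bar>\<dots>\<bar> \<le> (\<Sum>n\<in>?D. \<bar>a n - b n\<bar>)" by (rule sum_abs)
  also have "\<dots> \<le> (\<Sum>n\<in>?D. 2)"
  proof (rule sum_mono)
    fix n assume "n \<in> ?D"
    hence "\<bar>a n\<bar> \<le> 1" "\<bar>b n\<bar> \<le> 1" using assms(2,3) by auto
    thus "\<bar>a n - b n\<bar> \<le> 2" by linarith
  qed
  finally show ?thesis by simp
qed

lemma sign_space_abs_le_1:
  assumes "e \<in> sign_space N S" "n \<in> {1..N}" "s \<in> {1..S}"
  shows "\<bar>e (n, s)\<bar> \<le> 1"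
proof -
  have "e (n, s) \<in> {-1, 1}" using assms unfolding sign_space_def by blast
  thus ?thesis by auto
qed

lemma finite_admissible: "finite (admissible N S k)"
proof (rule finite_subset)
  show "admissible N S k \<subseteq> {1..N} \<times> ({0..<k} \<rightarrow>\<^sub>E {0..<N}) \<times> ({0..<k} \<rightarrow>\<^sub>E {1..S})"
    unfolding admissible_def by auto
qed (intro finite_cartesian_product finite_PiE; simp)+

lemma correlation_row_change_le:
  assumes e: "e \<in> sign_space N S" and e': "e' \<in> sign_space N S"
    and agree: "\<And>n s. n \<noteq> j \<Longrightarrow> e (n, s) = e' (n, s)"
    and adm: "(M, d, s) \<in> admissible N S k"
  shows "\<bar>\<Sum>n = 1..M. \<Prod>i<k. e (n + d i, s i)\<bar> \<le> \<bar>\<Sum>n = 1..M. \<Prod>i<k. e' (n + d i, s i)\<bar> + 2 * real k"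
proof -
  have in_box: "n + d i \<in> {1..N}" "s i \<in> {1..S}" if "n \<in> {1..M}" "i < k" for n i
  proof -
    have "d i \<le> d (k - 1)" "M + d (k - 1) \<le> N" using adm that unfolding admissible_def by auto
    thus "n + d i \<in> {1..N}" using that by auto
    show "s i \<in> {1..S}" using adm that unfolding admissible_def by (auto simp: PiE_iff)
  qed
  have "\<bar>\<Prod>i<k. e (n + d i, s i)\<bar> \<le> 1" "\<bar>\<Prod>i<k. e' (n + d i, s i)\<bar> \<le> 1" if "n \<in> {1..M}" for n
    unfolding abs_prod using sign_space_abs_le_1[OF e] sign_space_abs_le_1[OF e'] in_box[OF that]
    by (auto intro!: prod_le_1)
  hence "\<bar>(\<Sum>n = 1..M. \<Prod>i<k. e (n + d i, s i)) - (\<Sum>n = 1..M. \<Prod>i<k. e' (n + d i, s i))\<bar>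
           \<le> 2 * card {n \<in> {1..M}. (\<Prod>i<k. e (n + d i, s i)) \<noteq> (\<Prod>i<k. e' (n + d i, s i))}"
    by (intro abs_sum_diff_le_card_disagreements) auto
  \<comment> \<open>A term can only change if one of its k factors lies in row j.\<close>
  also have "card {n \<in> {1..M}. (\<Prod>i<k. e (n + d i, s i)) \<noteq> (\<Prod>i<k. e' (n + d i, s i))}
               \<le> card ((\<lambda>i. j - d i) ` {..<k})"
  proof (rule card_mono)
    show "{n \<in> {1..M}. (\<Prod>i<k. e (n + d i, s i)) \<noteq> (\<Prod>i<k. e' (n + d i, s i))} \<subseteq> (\<lambda>i. j - d i) ` {..<k}"
    proof (rule subsetI, rule ccontr)
      fix n assume n: "n \<in> {n \<in> {1..M}. (\<Prod>i<k. e (n + d i, s i)) \<noteq> (\<Prod>i<k. e' (n + d i, s i))}"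
        and "n \<notin> (\<lambda>i. j - d i) ` {..<k}"
      hence "n + d i \<noteq> j" if "i < k" for i using that by force
      hence "(\<Prod>i<k. e (n + d i, s i)) = (\<Prod>i<k. e' (n + d i, s i))"
        using agree by (intro prod.cong) auto
      with n show False by simp
    qed
  qed simp
  also have "\<dots> \<le> k" using card_image_le[of "{..<k}" "\<lambda>i. j - d i"] by simp
  finally show ?thesis by linarith
qed

lemma cross_corr_row_change_le:
  assumes "e \<in> sign_space N S" and "e' \<in> sign_space N S"
    and "\<And>n s. n \<noteq> j \<Longrightarrow> e (n, s) = e' (n, s)"
  shows "cross_corr N S k e \<le> cross_corr N S k e' + 2 * real k"
proof -
  let ?C = "\<lambda>e (M, d, s). \<bar>\<Sum>n = 1..M. \<Prod>i<k. e (n + d i, s i)\<bar>"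
  have cross_corr_eq: "cross_corr N S k e = Max (insert 0 (?C e ` admissible N S k))" for e
    unfolding cross_corr_def by (rule arg_cong[where f = "\<lambda>X. Max (insert 0 X)"]) force
  have "?C e p \<le> Max (insert 0 (?C e' ` admissible N S k)) + 2 * real k" if "p \<in> admissible N S k" for p
  proof -
    have "?C e' p \<le> Max (insert 0 (?C e' ` admissible N S k))"
      using finite_admissible that by (intro Max_ge) auto
    moreover have "?C e p \<le> ?C e' p + 2 * real k"
      using correlation_row_change_le[OF assms] that by (cases p) auto
    ultimately show ?thesis by linarith
  qed
  moreover have "0 \<le> Max (insert 0 (?C e' ` admissible N S k))"
    using finite_admissible by simp
  ultimately show ?thesis
    unfolding cross_corr_eq using finite_admissible by (auto simp: Max_le_iff)
qed

definition signs_of_rows :: "nat \<Rightarrow> nat \<Rightarrow> (nat \<Rightarrow> nat \<Rightarrow> real) \<Rightarrow> (nat \<times> nat \<Rightarrow> real)" where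
  "signs_of_rows N S x = restrict (case_prod x) ({1..N} \<times> {1..S})"

lemma bij_betw_signs_of_rows:
  "bij_betw (signs_of_rows N S) (Pi\<^sub>E {1..N} (\<lambda>_. {1..S} \<rightarrow>\<^sub>E {-1, 1})) (sign_space N S)"
  using bij_betw_PiE_uncurry[of "{1..N}" "\<lambda>_. {1..S}" "\<lambda>_ _. {-1, 1::real}"]
  unfolding signs_of_rows_def sign_space_def by (simp add: split_def)

lemma cross_corr_signs_of_rows_bounded_differences:
  assumes "x \<in> Pi\<^sub>E {1..N} (\<lambda>_. {1..S} \<rightarrow>\<^sub>E {-1, 1})" and "j \<in> {1..N}"
    and "a \<in> {1..S} \<rightarrow>\<^sub>E {-1, 1}"
  shows "cross_corr N S k (signs_of_rows N S x) - cross_corr N S k (signs_of_rows N S (x(j := a)))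
           \<le> 2 * real k"
proof -
  have "x(j := a) \<in> Pi\<^sub>E {1..N} (\<lambda>_. {1..S} \<rightarrow>\<^sub>E {-1, 1})"
    using assms by (auto simp: PiE_iff extensional_def)
  hence "signs_of_rows N S x \<in> sign_space N S" "signs_of_rows N S (x(j := a)) \<in> sign_space N S"
    using bij_betwE[OF bij_betw_signs_of_rows] assms(1) by auto
  moreover have "signs_of_rows N S x (n, s) = signs_of_rows N S (x(j := a)) (n, s)" if "n \<noteq> j" for n s
    using that by (simp add: signs_of_rows_def)
  ultimately have "cross_corr N S k (signs_of_rows N S x)
                    \<le> cross_corr N S k (signs_of_rows N S (x(j := a))) + 2 * real k"
    by (rule cross_corr_row_change_le)
  thus ?thesis by simp
qed

theorem lemma2:
  fixes N S k :: nat and \<theta> :: real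
  assumes "N > 0" and "S > 0" and "k > 0" and "\<theta> \<ge> 0"
  shows "measure_pmf.prob (pmf_of_set (sign_space N S))
           {e. \<bar>cross_corr N S k e
                 - measure_pmf.expectation (pmf_of_set (sign_space N S)) (cross_corr N S k)\<bar> \<ge> \<theta>}
         \<le> 2 * exp (- (\<theta>\<^sup>2 / (2 * (real k)\<^sup>2 * real N)))"
proof -
  define X where "X = Pi\<^sub>E {1..N} (\<lambda>_. {1..S} \<rightarrow>\<^sub>E {-1, 1::real})"
  define F where "F = (\<lambda>x. cross_corr N S k (signs_of_rows N S x))"
  have X: "finite X" "X \<noteq> {}" unfolding X_def by (auto simp: finite_PiE PiE_eq_empty_iff)
  have "pmf_of_set (sign_space N S) = map_pmf (signs_of_rows N S) (pmf_of_set X)"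
    using bij_betw_signs_of_rows X unfolding X_def by (simp add: map_pmf_of_set_inj bij_betw_def)
  hence "measure_pmf.prob (pmf_of_set (sign_space N S))
           {e. \<bar>cross_corr N S k e
                 - measure_pmf.expectation (pmf_of_set (sign_space N S)) (cross_corr N S k)\<bar> \<ge> \<theta>}
         = measure_pmf.prob (pmf_of_set X) {x. \<bar>F x - measure_pmf.expectation (pmf_of_set X) F\<bar> \<ge> \<theta>}"
    by (simp add: F_def vimage_def)
  also have "\<dots> \<le> 2 * exp (- (2 * \<theta>\<^sup>2 / (card {1..N} * (2 * real k)\<^sup>2)))"
    unfolding X_def F_def using \<open>\<theta> \<ge> 0\<close> cross_corr_signs_of_rows_bounded_differences
    by (intro McDiarmid_inequality_pmf_of_set) (auto simp: finite_PiE PiE_eq_empty_iff)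
  also have "2 * \<theta>\<^sup>2 / (card {1..N} * (2 * real k)\<^sup>2) = \<theta>\<^sup>2 / (2 * (real k)\<^sup>2 * real N)"
    by (simp add: power2_eq_square field_simps)
  finally show ?thesis .
qed

end
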